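(* Under the standing assumptions and assumption (A), $\mathcal{E}(u,u)<\infty$ for all $u\in\mathrm{Lip}_c(\overline D)$.
   Context: Let $d\ge1$, $\alpha\in(0,2)$. $D\subset\mathbb{R}^d$ is a $\kappa$-fat open set (some $\kappa\in(0,1)$, localization constant $R_0\in(0,\mathrm{diam}(D)]$: for all $x\in\overline D$, $r\in(0,R_0)$ there is $z\in D$ with $B(z,\kappa r)\subset D\cap B(x,r)$) with Assouad dimension $\dim_{\rm A}(\partial D)<d$; $\gamma:=d-\dim_{\rm A}(\partial D)$; $\delta_D(x)=\mathrm{dist}(x,\partial D)$; $r\wedge\infty=r$. Assumption (A): $J$ is a symmetric Borel function on $D\times D$ and there exist a continuous increasing $\Phi:[0,\infty)\to[1,\infty)$ with $\Phi(0)=1$ and upper Matuszewska index $\overline\beta<\gamma\wedge\alpha$ (where $\overline\beta$ is the infimum of $\beta\ge0$ such that $\Phi(r)/\Phi(s)\le C(r/s)^\beta$ for all $0<s\le r$ with some $C$), and constants $A_0\in(0,\infty]$, $C_1>1$ such that for all $x,y\in D$, $C_1^{-1}\le J(x,y)|x-y|^{d+\alpha}\big/\Phi\big(\frac{(|x-y|\wedge A_0)^2}{(\delta_D(x)\wedge A_0)(\delta_D(y)\wedge A_0)}\big)\le C_1$. $\mathcal{E}(u,v)=\frac12\int_{D\times D}(u(x)-u(y))(v(x)-v(y))J(x,y)\,dx\,dy$. $\mathrm{Lip}_c(\overline D)$ is the set of Lipschitz functions on $\overline D$ with compact support. *)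

theory Defs
  imports "HOL-Analysis.Analysis" "HOL-Probability.Probability"
begin

definition assouad_dim :: "'a::euclidean_space set \<Rightarrow> ereal" where
  "assouad_dim F = Inf (ereal ` {s::real. s \<ge> 0 \<and> (\<exists>C::real. \<forall>x\<in>F. \<forall>r R. 0 < r \<and> r < R \<longrightarrow>
      (\<exists>S. finite S \<and> F \<inter> ball x R \<subseteq> (\<Union>c\<in>S. ball c r) \<and> real (card S) \<le> C * (R / r) powr s))})"

definition upper_matuszewska :: "(real \<Rightarrow> real) \<Rightarrow> ereal" where
  "upper_matuszewska \<Phi> = Inf (ereal ` {\<beta>::real. \<beta> \<ge> 0 \<and> (\<exists>C::real. \<forall>s r. 0 < s \<and> s \<le> r \<longrightarrow>
      \<Phi> r / \<Phi> s \<le> C * (r / s) powr \<beta>)})"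

definition kappa_fat :: "real \<Rightarrow> real \<Rightarrow> 'a::euclidean_space set \<Rightarrow> bool" where
  "kappa_fat \<kappa> R0 D \<longleftrightarrow> open D \<and> 0 < \<kappa> \<and> \<kappa> < 1 \<and> 0 < R0 \<and> (bounded D \<longrightarrow> R0 \<le> diameter D) \<and>
     (\<forall>x\<in>closure D. \<forall>r. 0 < r \<and> r < R0 \<longrightarrow> (\<exists>z\<in>D. ball z (\<kappa> * r) \<subseteq> D \<inter> ball x r))"

definition delta :: "'a::euclidean_space set \<Rightarrow> 'a \<Rightarrow> real" where
  "delta D x = infdist x (frontier D)"

definition capA :: "ereal \<Rightarrow> real \<Rightarrow> real" where
  "capA A0 r = real_of_ereal (min (ereal r) A0)"

definition energy :: "'a::euclidean_space set \<Rightarrow> ('a \<Rightarrow> 'a \<Rightarrow> real) \<Rightarrow> ('a \<Rightarrow> real) \<Rightarrow> ennreal" where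
  "energy D J u = ennreal (1/2) * (\<integral>\<^sup>+ p. indicator (D \<times> D) p *
      ennreal ((u (fst p) - u (snd p))^2 * J (fst p) (snd p)) \<partial>(lborel \<Otimes>\<^sub>M lborel))"

end

theory Submission
  imports Defs
begin

(*
  Fix beta strictly between the upper Matuszewska index of Phi and min(alpha, d - dim_A(bdry D))
  and put w = delta_D^(-beta).  Truncating distances at A0 costs at most a factor
  1 + (r/delta_D)^beta on each side, so the upper scaling of Phi gives, with r = |x - y|,
      J(x,y) <= C r^(-d-alpha) (1 + r^beta w(x)) (1 + r^beta w(y)).
  Since beta + dim_A(bdry D) < d, Assouad coverings of the layers {delta_D ~ 2^-k R} of a ball
  centred on the boundary show that  int_{B(x,R)} w <= K R^(d-beta)  uniformly in x.
  As u is Lipschitz with bounded support, (u(x) - u(y))^2 <= c min(r^2, 1); summing over dyadic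
  annuli around x (the relevant exponents -alpha and beta - alpha lie in (-2, 0)) then gives
  int (u(x) - u(y))^2 J(x,y) dy <= B (1 + w(x)), which is integrable over a ball containing the
  support of u.  Pairs with only y in that ball are handled by symmetry.
*)

section \<open>Assouad dimension and upper Matuszewska index\<close>

definition assouad_covering :: "'a::euclidean_space set \<Rightarrow> real \<Rightarrow> real \<Rightarrow> bool" where
  "assouad_covering F C s \<longleftrightarrow> (\<forall>x\<in>F. \<forall>r R. 0 < r \<and> r < R \<longrightarrow>
     (\<exists>S. finite S \<and> F \<inter> ball x R \<subseteq> (\<Union>c\<in>S. ball c r) \<and> real (card S) \<le> C * (R / r) powr s))"

definition upper_scaling :: "(real \<Rightarrow> real) \<Rightarrow> real \<Rightarrow> real \<Rightarrow> bool" where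
  "upper_scaling \<Phi> C \<beta> \<longleftrightarrow> (\<forall>s r. 0 < s \<and> s \<le> r \<longrightarrow> \<Phi> r / \<Phi> s \<le> C * (r / s) powr \<beta>)"

lemma assouad_dim_altdef:
  "assouad_dim F = Inf (ereal ` {s. 0 \<le> s \<and> (\<exists>C. assouad_covering F C s)})"
  by (simp add: assouad_dim_def assouad_covering_def)

lemma upper_matuszewska_altdef:
  "upper_matuszewska \<Phi> = Inf (ereal ` {\<beta>. 0 \<le> \<beta> \<and> (\<exists>C. upper_scaling \<Phi> C \<beta>)})"
  by (simp add: upper_matuszewska_def upper_scaling_def)

lemma assouad_dim_nonneg: "0 \<le> assouad_dim F"
  unfolding assouad_dim_altdef by (auto intro!: Inf_greatest)

lemma assouad_covering_mono:
  assumes "assouad_covering F C s" "C \<le> C'"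
  shows "assouad_covering F C' s"
proof -
  have "C * (R / r) powr s \<le> C' * (R / r) powr s" for R r :: real
    using assms(2) by (intro mult_right_mono) auto
  then show ?thesis
    using assms(1) unfolding assouad_covering_def by (meson order_trans)
qed

lemma upper_scaling_mono:
  assumes "upper_scaling \<Phi> C \<beta>0" "\<beta>0 \<le> \<beta>"
  shows "upper_scaling \<Phi> (max C 0) \<beta>"
  unfolding upper_scaling_def
proof (intro allI impI)
  fix s r :: real
  assume sr: "0 < s \<and> s \<le> r"
  then have "1 \<le> r / s" by simp
  have "\<Phi> r / \<Phi> s \<le> C * (r / s) powr \<beta>0"
    using assms(1) sr unfolding upper_scaling_def by blast
  also have "\<dots> \<le> max C 0 * (r / s) powr \<beta>0" by (intro mult_right_mono) auto
  also have "\<dots> \<le> max C 0 * (r / s) powr \<beta>"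
    using \<open>1 \<le> r / s\<close> assms(2) by (intro mult_left_mono powr_mono) auto
  finally show "\<Phi> r / \<Phi> s \<le> max C 0 * (r / s) powr \<beta>" .
qed

lemma assouad_dim_less_imp_covering:
  assumes "assouad_dim F < ereal t"
  obtains s C where "s < t" "0 \<le> C" "assouad_covering F C s"
proof -
  obtain s C where "s < t" "assouad_covering F C s"
    using assms unfolding assouad_dim_altdef Inf_less_iff by auto
  then show ?thesis
    using that[of s "max C 0"] assouad_covering_mono[of F C s "max C 0"] by simp
qed

lemma upper_matuszewska_less_imp_scaling:
  assumes "upper_matuszewska \<Phi> < ereal t"
  obtains \<beta> C where "0 \<le> \<beta>" "\<beta> < t" "upper_scaling \<Phi> C \<beta>"
  using assms unfolding upper_matuszewska_altdef Inf_less_iff by auto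

lemma exponent_between_indices:
  fixes D :: "'a::euclidean_space set"
  assumes "0 < \<alpha>"
    and assouad: "assouad_dim (frontier D) < ereal (real DIM('a))"
    and index: "upper_matuszewska \<Phi> <
                  min (ereal (real DIM('a)) - assouad_dim (frontier D)) (ereal \<alpha>)"
  obtains \<beta> C s CA where "0 < \<beta>" "\<beta> < \<alpha>" "\<beta> + s < real DIM('a)" "0 \<le> CA"
    "upper_scaling \<Phi> C \<beta>" "assouad_covering (frontier D) CA s"
proof -
  let ?d = "real DIM('a)"
  obtain a where a: "assouad_dim (frontier D) = ereal a"
    using assouad assouad_dim_nonneg[of "frontier D"] by (cases "assouad_dim (frontier D)") auto
  have "upper_matuszewska \<Phi> < ereal (min (?d - a) \<alpha>)"
    using index a by simp
  then obtain \<beta>0 C where "0 \<le> \<beta>0" "\<beta>0 < min (?d - a) \<alpha>" "upper_scaling \<Phi> C \<beta>0"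
    by (rule upper_matuszewska_less_imp_scaling)
  moreover define \<beta> where "\<beta> = (\<beta>0 + min (?d - a) \<alpha>) / 2"
  ultimately have \<beta>: "\<beta>0 \<le> \<beta>" "0 < \<beta>" "\<beta> < \<alpha>" "assouad_dim (frontier D) < ereal (?d - \<beta>)"
    using a by auto
  obtain s CA where "s < ?d - \<beta>" "0 \<le> CA" "assouad_covering (frontier D) CA s"
    using assouad_dim_less_imp_covering[OF \<beta>(4)] .
  then show ?thesis
    using that[of \<beta> s CA "max C 0"] \<beta> upper_scaling_mono[OF \<open>upper_scaling \<Phi> C \<beta>0\<close> \<beta>(1)]
    by auto
qed

section \<open>Comparison of the jump kernel with boundary weights\<close>

lemma capA_cases:
  assumes "0 < A0" "0 \<le> t"
  obtains "A0 = \<infinity>" "capA A0 t = t" | A where "A0 = ereal A" "0 < A" "capA A0 t = min t A"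
  using assms by (cases A0) (auto simp: capA_def min_def)

lemma capA_nonneg: "0 < A0 \<Longrightarrow> 0 \<le> t \<Longrightarrow> 0 \<le> capA A0 t"
  by (erule capA_cases) auto

lemma capA_powr_ratio_le:
  assumes A0: "0 < A0" and r: "0 \<le> r" and d: "0 \<le> \<delta>" and e: "0 < capA A0 \<delta>" and b: "0 \<le> \<beta>"
  shows "capA A0 r powr \<beta> / capA A0 \<delta> powr \<beta> \<le> 1 + r powr \<beta> * \<delta> powr -\<beta>"
proof (rule capA_cases[OF A0 d])
  assume "A0 = \<infinity>" "capA A0 \<delta> = \<delta>"
  moreover have "capA A0 r = r" using \<open>A0 = \<infinity>\<close> by (simp add: capA_def)
  ultimately show ?thesis by (simp add: powr_minus divide_inverse)
next
  fix A assume A: "A0 = ereal A" "0 < A" "capA A0 \<delta> = min \<delta> A"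
  have cr: "capA A0 r = min r A" using A r by (simp add: capA_def min_def)
  show ?thesis
  proof (cases "\<delta> \<le> A")
    case True
    then have \<delta>: "capA A0 \<delta> = \<delta>" "0 < \<delta>" using A e by auto
    have "capA A0 r powr \<beta> \<le> r powr \<beta>" using cr r b A by (intro powr_mono2) auto
    then have "capA A0 r powr \<beta> / capA A0 \<delta> powr \<beta> \<le> r powr \<beta> / \<delta> powr \<beta>"
      using \<delta> by (simp add: divide_right_mono)
    then show ?thesis by (simp add: powr_minus divide_inverse)
  next
    case False
    then have "capA A0 \<delta> = A" using A by simp
    moreover have "capA A0 r powr \<beta> \<le> A powr \<beta>" using cr r b A by (intro powr_mono2) auto
    ultimately have "capA A0 r powr \<beta> / capA A0 \<delta> powr \<beta> \<le> 1"
      using A by (simp add: divide_le_eq_1)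
    then show ?thesis
      using mult_nonneg_nonneg[OF powr_ge_zero powr_ge_zero, of r \<beta> \<delta> "-\<beta>"] by linarith
  qed
qed

lemma capA_quotient_powr_le:
  assumes A0: "0 < A0" and "0 \<le> r" "0 \<le> dx" "0 \<le> dy" "0 \<le> \<beta>"
  shows "((capA A0 r)\<^sup>2 / (capA A0 dx * capA A0 dy)) powr \<beta>
     \<le> (1 + r powr \<beta> * dx powr -\<beta>) * (1 + r powr \<beta> * dy powr -\<beta>)"
proof (cases "capA A0 dx = 0 \<or> capA A0 dy = 0")
  case True
  then show ?thesis by auto
next
  case False
  then have p: "0 < capA A0 dx" "0 < capA A0 dy"
    using capA_nonneg[OF A0] assms by (auto simp: order_le_less)
  have "((capA A0 r)\<^sup>2 / (capA A0 dx * capA A0 dy)) powr \<beta>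
      = (capA A0 r powr \<beta> / capA A0 dx powr \<beta>) * (capA A0 r powr \<beta> / capA A0 dy powr \<beta>)"
    using p capA_nonneg[OF A0 \<open>0 \<le> r\<close>] by (simp add: powr_divide powr_mult power2_eq_square)
  also have "\<dots> \<le> (1 + r powr \<beta> * dx powr -\<beta>) * (1 + r powr \<beta> * dy powr -\<beta>)"
    using p assms by (intro mult_mono capA_powr_ratio_le) auto
  finally show ?thesis .
qed

lemma upper_scaling_le:
  assumes scaling: "upper_scaling \<Phi> C \<beta>" and mono: "mono_on {0..} \<Phi>"
    and ge1: "\<forall>t\<ge>0. 1 \<le> \<Phi> t" and "0 \<le> q"
  shows "\<Phi> q \<le> \<Phi> 1 * max 1 C * max 1 (q powr \<beta>)"
proof (cases "q \<le> 1")
  case True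
  have "1 \<le> max 1 C * max 1 (q powr \<beta>)"
    using mult_mono[of 1 "max 1 C" 1 "max 1 (q powr \<beta>)"] by simp
  moreover have "0 \<le> \<Phi> 1" using ge1 by (meson order.trans zero_le_one order_refl)
  ultimately have "\<Phi> 1 \<le> \<Phi> 1 * (max 1 C * max 1 (q powr \<beta>))"
    using mult_left_mono[of 1 _ "\<Phi> 1"] by fastforce
  moreover have "\<Phi> q \<le> \<Phi> 1" using mono True \<open>0 \<le> q\<close> by (auto simp: mono_on_def)
  ultimately show ?thesis by (simp add: mult.assoc)
next
  case False
  have "\<Phi> q / \<Phi> 1 \<le> C * q powr \<beta>"
    using scaling False unfolding upper_scaling_def by (metis div_by_1 less_eq_real_def not_le zero_less_one)
  moreover have "0 < \<Phi> 1" using ge1 by (meson less_le_trans zero_le_one zero_less_one)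
  ultimately have "\<Phi> q \<le> \<Phi> 1 * (C * q powr \<beta>)" by (simp add: divide_le_eq mult.commute)
  also have "\<dots> \<le> \<Phi> 1 * (max 1 C * max 1 (q powr \<beta>))"
    using \<open>0 < \<Phi> 1\<close> by (intro mult_left_mono mult_mono) auto
  finally show ?thesis by (simp add: mult.assoc)
qed

lemma kernel_le_boundary_weights:
  assumes scaling: "upper_scaling \<Phi> C \<beta>" and mono: "mono_on {0..} \<Phi>"
    and ge1: "\<forall>t\<ge>0. 1 \<le> \<Phi> t" and "0 \<le> \<beta>"
    and A0: "0 < A0" and r: "0 < r" and "0 \<le> dx" "0 \<le> dy" and "0 \<le> C1"
    and J: "J * r powr p / \<Phi> ((capA A0 r)\<^sup>2 / (capA A0 dx * capA A0 dy)) \<le> C1"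
  shows "J \<le> C1 * (\<Phi> 1 * max 1 C) * r powr -p
              * (1 + r powr \<beta> * dx powr -\<beta>) * (1 + r powr \<beta> * dy powr -\<beta>)"
proof -
  define q where "q = (capA A0 r)\<^sup>2 / (capA A0 dx * capA A0 dy)"
  define W where "W = (1 + r powr \<beta> * dx powr -\<beta>) * (1 + r powr \<beta> * dy powr -\<beta>)"
  have "0 \<le> q" unfolding q_def using capA_nonneg[OF A0] assms by simp
  have "1 * 1 \<le> W" unfolding W_def by (intro mult_mono) auto
  have "\<Phi> q \<le> \<Phi> 1 * max 1 C * max 1 (q powr \<beta>)"
    by (rule upper_scaling_le[OF scaling mono ge1 \<open>0 \<le> q\<close>])
  also have "max 1 (q powr \<beta>) \<le> W"
    using \<open>1 * 1 \<le> W\<close> capA_quotient_powr_le[OF A0 less_imp_le[OF r]] assms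
    unfolding q_def W_def by auto
  then have "\<Phi> 1 * max 1 C * max 1 (q powr \<beta>) \<le> \<Phi> 1 * max 1 C * W"
    using ge1[rule_format, of 1] by (intro mult_left_mono mult_nonneg_nonneg) auto
  finally have "\<Phi> q \<le> \<Phi> 1 * max 1 C * W" .
  moreover have "0 < \<Phi> q" using ge1 \<open>0 \<le> q\<close> by (meson less_le_trans zero_less_one)
  ultimately have "J * r powr p \<le> C1 * (\<Phi> 1 * max 1 C * W)"
    using J \<open>0 \<le> C1\<close> unfolding q_def[symmetric]
    by (meson mult_left_mono order_trans pos_divide_le_eq)
  then have "J \<le> C1 * (\<Phi> 1 * max 1 C * W) / r powr p"
    using r by (simp add: pos_le_divide_eq)
  then show ?thesis
    unfolding W_def by (simp add: powr_minus divide_inverse mult_ac)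
qed

section \<open>Lipschitz functions with bounded support\<close>

lemma lipschitz_bounded_support_imp_bounded:
  fixes u :: "'a::metric_space \<Rightarrow> real"
  assumes lip: "lipschitz_on L A u" and supp: "bounded {x \<in> A. u x \<noteq> 0}"
  obtains M where "0 \<le> M" "\<And>x. x \<in> A \<Longrightarrow> \<bar>u x\<bar> \<le> M"
proof (cases "\<exists>x0\<in>A. u x0 \<noteq> 0")
  case False
  then show ?thesis using that[of 0] by auto
next
  case True
  then obtain x0 where x0: "x0 \<in> A" "u x0 \<noteq> 0" by blast
  obtain z e where ze: "\<And>y. y \<in> A \<Longrightarrow> u y \<noteq> 0 \<Longrightarrow> dist z y \<le> e"
    using supp unfolding bounded_def by blast
  have "0 \<le> L" using lip by (simp add: lipschitz_on_def)
  have "0 \<le> e" using ze[OF x0] zero_le_dist[of z x0] by linarith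
  have "\<bar>u x\<bar> \<le> \<bar>u x0\<bar> + L * (2 * e)" if "x \<in> A" for x
  proof (cases "u x = 0")
    case False
    have "dist x x0 \<le> 2 * e"
      using ze[OF \<open>x \<in> A\<close> False] ze[OF x0] dist_triangle3[of x x0 z] by linarith
    then have "\<bar>u x - u x0\<bar> \<le> L * (2 * e)"
      using lip \<open>x \<in> A\<close> x0 \<open>0 \<le> L\<close> unfolding lipschitz_on_def dist_real_def
      by (meson mult_left_mono order_trans)
    then show ?thesis by linarith
  qed (use \<open>0 \<le> L\<close> \<open>0 \<le> e\<close> in simp)
  moreover have "0 \<le> \<bar>u x0\<bar> + L * (2 * e)"
    using \<open>0 \<le> L\<close> \<open>0 \<le> e\<close> by simp
  ultimately show ?thesis using that x0 by blast
qed

lemma lipschitz_bounded_support_sq_diff_le: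
  fixes u :: "'a::metric_space \<Rightarrow> real"
  assumes lip: "lipschitz_on L A u" and supp: "bounded {x \<in> A. u x \<noteq> 0}"
  obtains c where "0 \<le> c" "\<And>x y. x \<in> A \<Longrightarrow> y \<in> A \<Longrightarrow> (u x - u y)\<^sup>2 \<le> c * min ((dist x y)\<^sup>2) 1"
proof -
  obtain M where M: "0 \<le> M" "\<And>x. x \<in> A \<Longrightarrow> \<bar>u x\<bar> \<le> M"
    using lipschitz_bounded_support_imp_bounded[OF lip supp] by blast
  define c where "c = max (L\<^sup>2) ((2 * M)\<^sup>2)"
  have "(u x - u y)\<^sup>2 \<le> c * min ((dist x y)\<^sup>2) 1" if "x \<in> A" "y \<in> A" for x y
  proof -
    have "\<bar>u x - u y\<bar> \<le> L * dist x y"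
      using lip that unfolding lipschitz_on_def dist_real_def by blast
    from power_mono[OF this abs_ge_zero, of 2]
    have lip2: "(u x - u y)\<^sup>2 \<le> L\<^sup>2 * (dist x y)\<^sup>2"
      by (simp add: power_mult_distrib)
    have "\<bar>u x - u y\<bar> \<le> 2 * M" using M(2)[OF that(1)] M(2)[OF that(2)] by linarith
    from power_mono[OF this abs_ge_zero, of 2]
    have bnd2: "(u x - u y)\<^sup>2 \<le> (2 * M)\<^sup>2"
      by simp
    show ?thesis
    proof (cases "dist x y \<le> 1")
      case True
      then have "min ((dist x y)\<^sup>2) 1 = (dist x y)\<^sup>2" by (simp add: power_le_one)
      then show ?thesis
        using lip2 mult_right_mono[of "L\<^sup>2" c "(dist x y)\<^sup>2"] by (simp add: c_def)
    next
      case False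
      then have "min ((dist x y)\<^sup>2) 1 = 1" by (simp add: min_def power_le_one_iff)
      then show ?thesis using bnd2 by (simp add: c_def)
    qed
  qed
  moreover have "0 \<le> c" by (simp add: c_def le_max_iff_disj)
  ultimately show ?thesis using that by blast
qed

section \<open>Dyadic decompositions\<close>

lemma sets_borel_ball[measurable]: "ball (x::'a::metric_space) r \<in> sets borel"
  by simp

lemma two_power_powr: "((2::real) ^ k) powr b = (2 powr b) ^ k"
proof -
  have "(2::real) ^ k = 2 powr real k" by (simp add: powr_realpow)
  then show ?thesis by (simp add: powr_powr powr_power mult.commute)
qed

lemma inverse_two_power_powr: "(1 / (2::real) ^ k) powr b = (2 powr -b) ^ k"
proof -
  have "(1 / (2::real) ^ k) powr b = 1 / ((2::real) ^ k) powr b" by (simp add: powr_divide)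
  also have "\<dots> = (2 powr -b) ^ k" by (simp add: two_power_powr powr_minus_divide power_one_over)
  finally show ?thesis .
qed

lemma powr_le_on_annulus:
  fixes r \<rho> a :: real
  assumes "0 < \<rho>" "\<rho>/2 \<le> r" "r \<le> 2*\<rho>"
  shows "r powr a \<le> 2 powr \<bar>a\<bar> * \<rho> powr a"
proof (cases "0 \<le> a")
  case True
  then have "r powr a \<le> (2*\<rho>) powr a"
    using assms by (intro powr_mono2) auto
  then show ?thesis using True assms by (simp add: powr_mult)
next
  case False
  then have "r powr a \<le> (\<rho>/2) powr a"
    using assms by (intro powr_mono2') auto
  then show ?thesis using False assms by (simp add: powr_divide powr_minus_divide)
qed

lemma suminf_ennreal_geometric:
  fixes c q :: real
  assumes "0 \<le> c" "0 \<le> q" "q < 1"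
  shows "(\<Sum>k. ennreal (c * q^k)) = ennreal (c / (1 - q))"
proof -
  have "(\<lambda>k. c * q^k) sums (c * (1 / (1 - q)))"
    using assms by (intro sums_mult geometric_sums) auto
  then show ?thesis
    using assms by (subst suminf_ennreal_eq) auto
qed

lemma ennreal_le_suminf: "(f :: nat \<Rightarrow> ennreal) k \<le> suminf f"
  using sum_le_suminf[of f "{k}"] by (auto simp: summableI)

lemma ex_dyadic_interval:
  fixes v :: real
  assumes "1 \<le> v"
  obtains k :: nat where "2^k \<le> v" "v < 2^Suc k"
proof -
  obtain n where "v < 2^n" using real_arch_pow[of 2 v] by auto
  then have "\<exists>n. \<not> v < 2^n \<and> v < 2^Suc n"
    using assms by (intro exists_least_lemma) auto
  then show ?thesis using that by (auto simp: not_less)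
qed

lemma nn_integral_le_suminf_dyadic:
  fixes f :: "'b \<Rightarrow> ennreal" and \<phi> :: "'b \<Rightarrow> real"
  assumes "\<And>k. (\<lambda>y. indicator {y. 2^k \<le> \<phi> y \<and> \<phi> y < 2^Suc k} y * f y) \<in> borel_measurable M"
  shows "(\<integral>\<^sup>+y. indicator {y. 1 \<le> \<phi> y} y * f y \<partial>M)
     \<le> (\<Sum>k. \<integral>\<^sup>+y. indicator {y. 2^k \<le> \<phi> y \<and> \<phi> y < 2^Suc k} y * f y \<partial>M)"
proof -
  have "(\<integral>\<^sup>+y. indicator {y. 1 \<le> \<phi> y} y * f y \<partial>M)
     \<le> (\<integral>\<^sup>+y. (\<Sum>k. indicator {y. 2^k \<le> \<phi> y \<and> \<phi> y < 2^Suc k} y * f y) \<partial>M)"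
  proof (rule nn_integral_mono)
    fix y
    show "indicator {y. 1 \<le> \<phi> y} y * f y
        \<le> (\<Sum>k. indicator {y. 2^k \<le> \<phi> y \<and> \<phi> y < 2^Suc k} y * f y)"
    proof (cases "1 \<le> \<phi> y")
      case True
      then obtain k :: nat where k: "2^k \<le> \<phi> y" "\<phi> y < 2^Suc k"
        by (rule ex_dyadic_interval)
      let ?t = "\<lambda>k. indicator {y. 2^k \<le> \<phi> y \<and> \<phi> y < 2^Suc k} y * f y"
      have "indicator {y. 1 \<le> \<phi> y} y * f y = ?t k"
        using True k by simp
      also have "\<dots> \<le> suminf ?t"
        by (rule ennreal_le_suminf)
      finally show ?thesis .
    qed simp
  qed
  also have "\<dots> = (\<Sum>k. \<integral>\<^sup>+y. indicator {y. 2^k \<le> \<phi> y \<and> \<phi> y < 2^Suc k} y * f y \<partial>M)"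
    using assms by (rule nn_integral_suminf)
  finally show ?thesis .
qed

lemma nn_integral_annulus_le:
  fixes g :: "'a::euclidean_space \<Rightarrow> ennreal"
  assumes g[measurable]: "g \<in> borel_measurable lborel" and "0 \<le> C" and "0 < \<rho>"
    and growth: "\<And>R. 0 < R \<Longrightarrow> (\<integral>\<^sup>+y. indicator (ball x R) y * g y \<partial>lborel) \<le> ennreal (C * R powr \<tau>)"
    and annulus: "A \<subseteq> {y. \<rho>/2 \<le> dist x y \<and> dist x y < 2*\<rho>}"
  shows "(\<integral>\<^sup>+y. indicator A y * (ennreal (dist x y powr a) * g y) \<partial>lborel)
     \<le> ennreal (C * 2 powr (\<bar>a\<bar> + \<tau>) * \<rho> powr (a + \<tau>))"
proof -
  have "(\<integral>\<^sup>+y. indicator A y * (ennreal (dist x y powr a) * g y) \<partial>lborel)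
      \<le> (\<integral>\<^sup>+y. ennreal (2 powr \<bar>a\<bar> * \<rho> powr a) * (indicator (ball x (2*\<rho>)) y * g y) \<partial>lborel)"
  proof (rule nn_integral_mono)
    fix y
    show "indicator A y * (ennreal (dist x y powr a) * g y)
        \<le> ennreal (2 powr \<bar>a\<bar> * \<rho> powr a) * (indicator (ball x (2*\<rho>)) y * g y)"
    proof (cases "y \<in> A")
      case True
      then have "dist x y powr a \<le> 2 powr \<bar>a\<bar> * \<rho> powr a" "y \<in> ball x (2*\<rho>)"
        using annulus \<open>0 < \<rho>\<close> powr_le_on_annulus[of \<rho> "dist x y" a] by auto
      then show ?thesis using True by (auto intro!: mult_right_mono ennreal_leI)
    qed simp
  qed
  also have "\<dots> = ennreal (2 powr \<bar>a\<bar> * \<rho> powr a)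
                  * (\<integral>\<^sup>+y. indicator (ball x (2*\<rho>)) y * g y \<partial>lborel)"
    by (intro nn_integral_cmult) measurable
  also have "\<dots> \<le> ennreal (2 powr \<bar>a\<bar> * \<rho> powr a) * ennreal (C * (2*\<rho>) powr \<tau>)"
    using \<open>0 < \<rho>\<close> by (intro mult_left_mono growth) auto
  also have "\<dots> = ennreal (C * 2 powr (\<bar>a\<bar> + \<tau>) * \<rho> powr (a + \<tau>))"
    using \<open>0 \<le> C\<close> \<open>0 < \<rho>\<close> by (simp add: ennreal_mult[symmetric] powr_mult powr_add mult_ac)
  finally show ?thesis .
qed

lemma nn_integral_near_dist_powr_le:
  fixes g :: "'a::euclidean_space \<Rightarrow> ennreal"
  assumes g[measurable]: "g \<in> borel_measurable lborel" and "0 \<le> C"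
    and growth: "\<And>R. 0 < R \<Longrightarrow> (\<integral>\<^sup>+y. indicator (ball x R) y * g y \<partial>lborel) \<le> ennreal (C * R powr \<tau>)"
    and "0 < a + \<tau>"
  shows "(\<integral>\<^sup>+y. indicator {y. 1 \<le> 1 / dist x y} y * (ennreal (dist x y powr a) * g y) \<partial>lborel)
     \<le> ennreal (C * 2 powr (\<bar>a\<bar> + \<tau>) / (1 - 2 powr -(a + \<tau>)))"
proof -
  have "(\<integral>\<^sup>+y. indicator {y. 1 \<le> 1 / dist x y} y * (ennreal (dist x y powr a) * g y) \<partial>lborel)
     \<le> (\<Sum>k. \<integral>\<^sup>+y. indicator {y. 2^k \<le> 1 / dist x y \<and> 1 / dist x y < 2^Suc k} y
                      * (ennreal (dist x y powr a) * g y) \<partial>lborel)"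
    by (intro nn_integral_le_suminf_dyadic) measurable
  also have "\<dots> \<le> (\<Sum>k. ennreal (C * 2 powr (\<bar>a\<bar> + \<tau>) * (2 powr -(a + \<tau>))^k))"
  proof (intro suminf_le summableI)
    fix k :: nat
    have "{y. 2^k \<le> 1 / dist x y \<and> 1 / dist x y < 2^Suc k}
        \<subseteq> {y. (1 / 2^k) / 2 \<le> dist x y \<and> dist x y < 2 * (1 / 2^k)}"
    proof safe
      fix y assume "2^k \<le> 1 / dist x y" "1 / dist x y < 2^Suc k"
      moreover from this have "0 < dist x y"
        using less_le_trans[of 0 "2^k" "1 / dist x y"] by simp
      ultimately show "(1 / 2^k) / 2 \<le> dist x y" "dist x y < 2 * (1 / 2^k)"
        by (auto simp: field_simps)
    qed
    from nn_integral_annulus_le[OF g \<open>0 \<le> C\<close> _ growth this]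
    show "(\<integral>\<^sup>+y. indicator {y. 2^k \<le> 1 / dist x y \<and> 1 / dist x y < 2^Suc k} y
                * (ennreal (dist x y powr a) * g y) \<partial>lborel)
        \<le> ennreal (C * 2 powr (\<bar>a\<bar> + \<tau>) * (2 powr -(a + \<tau>))^k)"
      by (simp add: inverse_two_power_powr)
  qed
  also have "\<dots> = ennreal (C * 2 powr (\<bar>a\<bar> + \<tau>) / (1 - 2 powr -(a + \<tau>)))"
    using \<open>0 \<le> C\<close> \<open>0 < a + \<tau>\<close> by (subst suminf_ennreal_geometric) (auto intro!: powr_less_one)
  finally show ?thesis .
qed

lemma nn_integral_far_dist_powr_le:
  fixes g :: "'a::euclidean_space \<Rightarrow> ennreal"
  assumes g[measurable]: "g \<in> borel_measurable lborel" and "0 \<le> C"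
    and growth: "\<And>R. 0 < R \<Longrightarrow> (\<integral>\<^sup>+y. indicator (ball x R) y * g y \<partial>lborel) \<le> ennreal (C * R powr \<tau>)"
    and "a + \<tau> < 0"
  shows "(\<integral>\<^sup>+y. indicator {y. 1 \<le> dist x y} y * (ennreal (dist x y powr a) * g y) \<partial>lborel)
     \<le> ennreal (C * 2 powr (\<bar>a\<bar> + \<tau>) / (1 - 2 powr (a + \<tau>)))"
proof -
  have "(\<integral>\<^sup>+y. indicator {y. 1 \<le> dist x y} y * (ennreal (dist x y powr a) * g y) \<partial>lborel)
     \<le> (\<Sum>k. \<integral>\<^sup>+y. indicator {y. 2^k \<le> dist x y \<and> dist x y < 2^Suc k} y
                      * (ennreal (dist x y powr a) * g y) \<partial>lborel)"
    by (intro nn_integral_le_suminf_dyadic) measurable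
  also have "\<dots> \<le> (\<Sum>k. ennreal (C * 2 powr (\<bar>a\<bar> + \<tau>) * (2 powr (a + \<tau>))^k))"
  proof (intro suminf_le summableI)
    fix k :: nat
    have "{y. 2^k \<le> dist x y \<and> dist x y < 2^Suc k} \<subseteq> {y. 2^k / 2 \<le> dist x y \<and> dist x y < 2 * 2^k}"
      by auto
    from nn_integral_annulus_le[OF g \<open>0 \<le> C\<close> _ growth this]
    show "(\<integral>\<^sup>+y. indicator {y. 2^k \<le> dist x y \<and> dist x y < 2^Suc k} y
                * (ennreal (dist x y powr a) * g y) \<partial>lborel)
        \<le> ennreal (C * 2 powr (\<bar>a\<bar> + \<tau>) * (2 powr (a + \<tau>))^k)"
      by (simp add: two_power_powr)
  qed
  also have "\<dots> = ennreal (C * 2 powr (\<bar>a\<bar> + \<tau>) / (1 - 2 powr (a + \<tau>)))"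
    using \<open>0 \<le> C\<close> \<open>a + \<tau> < 0\<close> by (subst suminf_ennreal_geometric) (auto intro!: powr_less_one)
  finally show ?thesis .
qed

lemma truncated_kernel_le_near_far:
  fixes x y :: "'a::metric_space" and c :: ennreal
  shows "ennreal (min ((dist x y)\<^sup>2) 1 * dist x y powr e) * c
     \<le> indicator {y. 1 \<le> 1 / dist x y} y * (ennreal (dist x y powr (2 + e)) * c)
       + indicator {y. 1 \<le> dist x y} y * (ennreal (dist x y powr e) * c)"
proof -
  consider "dist x y = 0" | "0 < dist x y" "dist x y \<le> 1" | "1 < dist x y"
    using zero_le_dist[of x y] by linarith
  then show ?thesis
  proof cases
    case 2
    then have "min ((dist x y)\<^sup>2) 1 = dist x y powr 2"
      by (simp add: power_le_one powr_numeral)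
    then have "min ((dist x y)\<^sup>2) 1 * dist x y powr e = dist x y powr (2 + e)"
      by (simp add: powr_add)
    then show ?thesis using 2 by simp
  next
    case 3
    then have "min ((dist x y)\<^sup>2) 1 = 1" "\<not> 1 \<le> 1 / dist x y"
      by (auto simp: min_def power_le_one_iff le_divide_eq_1)
    then show ?thesis using 3 by simp
  qed simp
qed

lemma nn_integral_truncated_kernel_le:
  fixes g :: "'a::euclidean_space \<Rightarrow> ennreal"
  assumes g[measurable]: "g \<in> borel_measurable lborel" and "0 \<le> C"
    and growth: "\<And>x R. 0 < R \<Longrightarrow> (\<integral>\<^sup>+y. indicator (ball x R) y * g y \<partial>lborel) \<le> ennreal (C * R powr \<tau>)"
    and "0 < 2 + e + \<tau>" "e + \<tau> < 0"
  obtains B where "0 \<le> B"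
    "\<And>x. (\<integral>\<^sup>+y. ennreal (min ((dist x y)\<^sup>2) 1 * dist x y powr e) * g y \<partial>lborel) \<le> ennreal B"
proof -
  define B\<^sub>1 where "B\<^sub>1 = C * 2 powr (\<bar>2 + e\<bar> + \<tau>) / (1 - 2 powr -(2 + e + \<tau>))"
  define B\<^sub>2 where "B\<^sub>2 = C * 2 powr (\<bar>e\<bar> + \<tau>) / (1 - 2 powr (e + \<tau>))"
  have "(2::real) powr -(2 + e + \<tau>) < 1" "(2::real) powr (e + \<tau>) < 1"
    using assms(4,5) by (auto intro!: powr_less_one)
  then have "0 \<le> B\<^sub>1" "0 \<le> B\<^sub>2"
    using \<open>0 \<le> C\<close> unfolding B\<^sub>1_def B\<^sub>2_def by (auto intro!: divide_nonneg_nonneg)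
  have "(\<integral>\<^sup>+y. ennreal (min ((dist x y)\<^sup>2) 1 * dist x y powr e) * g y \<partial>lborel) \<le> ennreal (B\<^sub>1 + B\<^sub>2)"
    for x
  proof -
    let ?near = "\<lambda>y. indicator {y. 1 \<le> 1 / dist x y} y * (ennreal (dist x y powr (2 + e)) * g y)"
    let ?far = "\<lambda>y. indicator {y. 1 \<le> dist x y} y * (ennreal (dist x y powr e) * g y)"
    have "(\<integral>\<^sup>+y. ennreal (min ((dist x y)\<^sup>2) 1 * dist x y powr e) * g y \<partial>lborel)
        \<le> (\<integral>\<^sup>+y. ?near y + ?far y \<partial>lborel)"
      by (intro nn_integral_mono truncated_kernel_le_near_far)
    also have "\<dots> = (\<integral>\<^sup>+y. ?near y \<partial>lborel) + (\<integral>\<^sup>+y. ?far y \<partial>lborel)"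
      by (intro nn_integral_add) measurable
    also have "\<dots> \<le> ennreal B\<^sub>1 + ennreal B\<^sub>2"
      unfolding B\<^sub>1_def B\<^sub>2_def using assms(4,5)
      by (intro add_mono nn_integral_near_dist_powr_le nn_integral_far_dist_powr_le g \<open>0 \<le> C\<close> growth)
         auto
    finally show ?thesis using \<open>0 \<le> B\<^sub>1\<close> \<open>0 \<le> B\<^sub>2\<close> by (simp add: ennreal_plus)
  qed
  moreover have "0 \<le> B\<^sub>1 + B\<^sub>2" using \<open>0 \<le> B\<^sub>1\<close> \<open>0 \<le> B\<^sub>2\<close> by simp
  ultimately show ?thesis using that by blast
qed

section \<open>Local integrability of negative powers of the boundary distance\<close>

lemma delta_nonneg: "0 \<le> delta D x"
  by (simp add: delta_def infdist_nonneg)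

lemma delta_measurable[measurable]: "delta D \<in> borel_measurable borel"
  unfolding delta_def by (intro borel_measurable_continuous_onI continuous_intros)

lemma delta_attained:
  fixes D :: "'a::euclidean_space set"
  assumes "frontier D \<noteq> {}"
  obtains w where "w \<in> frontier D" "delta D y = dist y w"
  using infdist_attains_inf[OF frontier_closed assms] unfolding delta_def by blast

lemma emeasure_boundary_layer_le:
  fixes D :: "'a::euclidean_space set"
  assumes cov: "assouad_covering (frontier D) C s"
    and z: "z \<in> frontier D" and "0 < t" "t \<le> R"
  shows "emeasure lborel {y \<in> ball z R. delta D y \<le> t}
     \<le> ennreal (C * (2*R/t) powr s * (unit_ball_vol (real DIM('a)) * (2*t)^DIM('a)))"
proof -
  obtain S where S: "finite S" "frontier D \<inter> ball z (2*R) \<subseteq> (\<Union>c\<in>S. ball c t)"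
      "real (card S) \<le> C * (2*R / t) powr s"
  proof -
    have "0 < t \<and> t < 2*R" using \<open>0 < t\<close> \<open>t \<le> R\<close> by linarith
    then show ?thesis using cov z that unfolding assouad_covering_def by blast
  qed
  have "{y \<in> ball z R. delta D y \<le> t} \<subseteq> (\<Union>c\<in>S. ball c (2*t))"
  proof
    fix y assume y: "y \<in> {y \<in> ball z R. delta D y \<le> t}"
    obtain w where w: "w \<in> frontier D" "delta D y = dist y w"
      using delta_attained z by blast
    have "dist z w < 2*R"
      using y w dist_triangle[of z w y] \<open>t \<le> R\<close> by simp
    then obtain c where c: "c \<in> S" "dist c w < t" using S(2) w(1) by auto
    then have "dist c y < 2*t"
      using y w dist_triangle[of c y w] by (simp add: dist_commute)
    then show "y \<in> (\<Union>c\<in>S. ball c (2*t))" using c by auto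
  qed
  then have "emeasure lborel {y \<in> ball z R. delta D y \<le> t} \<le> emeasure lborel (\<Union>c\<in>S. ball c (2*t))"
    by (rule emeasure_mono) (auto intro!: borel_open)
  also have "\<dots> \<le> (\<Sum>c\<in>S. emeasure lborel (ball c (2*t)))"
    using S(1) by (intro emeasure_subadditive_finite) auto
  also have "\<dots> = ennreal (real (card S) * (unit_ball_vol (real DIM('a)) * (2*t)^DIM('a)))"
    using \<open>0 < t\<close> by (simp add: emeasure_ball ennreal_of_nat_eq_real_of_nat ennreal_mult'[symmetric])
  also have "\<dots> \<le> ennreal (C * (2*R/t) powr s * (unit_ball_vol (real DIM('a)) * (2*t)^DIM('a)))"
    using S(3) \<open>0 < t\<close> by (intro ennreal_leI mult_right_mono) auto
  finally show ?thesis .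
qed

lemma nn_integral_boundary_layer_le:
  fixes D :: "'a::euclidean_space set"
  assumes cov: "assouad_covering (frontier D) C s"
    and z: "z \<in> frontier D" and "0 < \<rho>" "\<rho> \<le> R" "0 \<le> C" "0 \<le> \<beta>"
  shows "(\<integral>\<^sup>+y. indicator {y. \<rho>/2 < delta D y \<and> delta D y \<le> \<rho>} y
                * (indicator (ball z R) y * ennreal (delta D y powr -\<beta>)) \<partial>lborel)
     \<le> ennreal (2 powr (\<beta> + s + real DIM('a)) * C * unit_ball_vol (real DIM('a))
                * R powr s * \<rho> powr (real DIM('a) - \<beta> - s))"
proof -
  let ?d = "real DIM('a)" and ?\<omega> = "unit_ball_vol (real DIM('a))"
  have "(\<integral>\<^sup>+y. indicator {y. \<rho>/2 < delta D y \<and> delta D y \<le> \<rho>} y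
                * (indicator (ball z R) y * ennreal (delta D y powr -\<beta>)) \<partial>lborel)
      \<le> (\<integral>\<^sup>+y. ennreal ((\<rho>/2) powr -\<beta>) * indicator {y \<in> ball z R. delta D y \<le> \<rho>} y \<partial>lborel)"
  proof (intro nn_integral_mono)
    fix y
    have "\<rho>/2 < delta D y \<Longrightarrow> delta D y powr -\<beta> \<le> (\<rho>/2) powr -\<beta>"
      using \<open>0 < \<rho>\<close> \<open>0 \<le> \<beta>\<close> by (intro powr_mono2') auto
    then show "indicator {y. \<rho>/2 < delta D y \<and> delta D y \<le> \<rho>} y
                * (indicator (ball z R) y * ennreal (delta D y powr -\<beta>))
        \<le> ennreal ((\<rho>/2) powr -\<beta>) * indicator {y \<in> ball z R. delta D y \<le> \<rho>} y"
      by (auto simp: indicator_def intro: ennreal_leI)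
  qed
  also have "\<dots> = ennreal ((\<rho>/2) powr -\<beta>) * emeasure lborel {y \<in> ball z R. delta D y \<le> \<rho>}"
    by (rule nn_integral_cmult_indicator) measurable
  also have "\<dots> \<le> ennreal ((\<rho>/2) powr -\<beta>) * ennreal (C * (2*R/\<rho>) powr s * (?\<omega> * (2*\<rho>)^DIM('a)))"
    using emeasure_boundary_layer_le[OF cov z \<open>0 < \<rho>\<close> \<open>\<rho> \<le> R\<close>] by (rule mult_left_mono) simp
  also have "\<dots> = ennreal (2 powr (\<beta> + s + ?d) * C * ?\<omega> * R powr s * \<rho> powr (?d - \<beta> - s))"
  proof -
    have R: "0 < R" using \<open>0 < \<rho>\<close> \<open>\<rho> \<le> R\<close> by linarith
    have e1: "(2*\<rho>)^DIM('a) = 2 powr ?d * \<rho> powr ?d"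
      using \<open>0 < \<rho>\<close> by (simp add: powr_realpow powr_mult[symmetric])
    have e2: "(2*R/\<rho>) powr s = 2 powr s * R powr s * \<rho> powr -s"
      using \<open>0 < \<rho>\<close> R by (simp add: powr_divide powr_mult powr_minus_divide)
    have e3: "(\<rho>/2) powr -\<beta> = 2 powr \<beta> * \<rho> powr -\<beta>"
      using \<open>0 < \<rho>\<close> by (simp add: powr_divide powr_minus_divide)
    have e4: "2 powr \<beta> * 2 powr s * 2 powr ?d = 2 powr (\<beta> + s + ?d)"
      by (simp add: powr_add[symmetric])
    have "?d - \<beta> - s = -\<beta> + -s + ?d" by simp
    then have e5: "\<rho> powr -\<beta> * \<rho> powr -s * \<rho> powr ?d = \<rho> powr (?d - \<beta> - s)"
      by (simp only: powr_add)
    have "(\<rho>/2) powr -\<beta> * (C * (2*R/\<rho>) powr s * (?\<omega> * (2*\<rho>)^DIM('a)))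
        = (2 powr \<beta> * 2 powr s * 2 powr ?d) * C * ?\<omega> * R powr s * (\<rho> powr -\<beta> * \<rho> powr -s * \<rho> powr ?d)"
      unfolding e1 e2 e3 by (simp only: mult_ac)
    then have "(\<rho>/2) powr -\<beta> * (C * (2*R/\<rho>) powr s * (?\<omega> * (2*\<rho>)^DIM('a)))
        = 2 powr (\<beta> + s + ?d) * C * ?\<omega> * R powr s * \<rho> powr (?d - \<beta> - s)"
      unfolding e4 e5 .
    then show ?thesis
      unfolding ennreal_mult'[OF powr_ge_zero, symmetric] by (rule arg_cong)
  qed
  finally show ?thesis .
qed

lemma nn_integral_near_boundary_delta_powr_le:
  fixes D :: "'a::euclidean_space set"
  assumes cov: "assouad_covering (frontier D) C s"
    and z: "z \<in> frontier D" and "0 < R" and "0 \<le> C" and "0 \<le> \<beta>" and "\<beta> + s < real DIM('a)"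
  shows "(\<integral>\<^sup>+y. indicator {y. 1 \<le> R / delta D y} y
                * (indicator (ball z R) y * ennreal (delta D y powr -\<beta>)) \<partial>lborel)
     \<le> ennreal (2 powr (\<beta> + s + real DIM('a)) * C * unit_ball_vol (real DIM('a))
                / (1 - 2 powr (\<beta> + s - real DIM('a))) * R powr (real DIM('a) - \<beta>))"
proof -
  let ?d = "real DIM('a)"
  let ?f = "\<lambda>y. indicator (ball z R) y * ennreal (delta D y powr -\<beta>)"
  define K where "K = 2 powr (\<beta> + s + ?d) * C * unit_ball_vol ?d"
  define q where "q = (2::real) powr (\<beta> + s - ?d)"
  have "0 \<le> K" "q < 1"
    using \<open>0 \<le> C\<close> \<open>\<beta> + s < ?d\<close> by (auto simp: K_def q_def intro!: powr_less_one)
  have "(\<integral>\<^sup>+y. indicator {y. 1 \<le> R / delta D y} y * ?f y \<partial>lborel)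
      \<le> (\<Sum>k. \<integral>\<^sup>+y. indicator {y. 2^k \<le> R / delta D y \<and> R / delta D y < 2^Suc k} y * ?f y \<partial>lborel)"
    by (intro nn_integral_le_suminf_dyadic) measurable
  also have "\<dots> \<le> (\<Sum>k. ennreal (K * R powr (?d - \<beta>) * q^k))"
  proof (intro suminf_le summableI)
    fix k :: nat
    define \<rho> where "\<rho> = R / 2^k"
    have "0 < \<rho>" "\<rho> \<le> R" using \<open>0 < R\<close> by (auto simp: \<rho>_def divide_le_eq)
    have shell: "{y. 2^k \<le> R / delta D y \<and> R / delta D y < 2^Suc k}
        = {y. \<rho>/2 < delta D y \<and> delta D y \<le> \<rho>}"
    proof (intro Collect_cong)
      fix y
      show "(2^k \<le> R / delta D y \<and> R / delta D y < 2^Suc k) = (\<rho>/2 < delta D y \<and> delta D y \<le> \<rho>)"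
      proof (cases "delta D y = 0")
        case False
        then have "0 < delta D y" using delta_nonneg[of D y] by linarith
        then show ?thesis using \<open>0 < R\<close> by (auto simp: \<rho>_def field_simps)
      qed (use \<open>0 < \<rho>\<close> in \<open>simp add: not_le\<close>)
    qed
    have "R powr s * \<rho> powr (?d - \<beta> - s) = R powr (?d - \<beta>) * q^k"
    proof -
      have "\<rho> powr (?d - \<beta> - s) = R powr (?d - \<beta> - s) * (1 / 2^k) powr (?d - \<beta> - s)"
        unfolding \<rho>_def using \<open>0 < R\<close> by (subst powr_mult[symmetric]) auto
      also have "(1 / 2^k) powr (?d - \<beta> - s) = q^k"
        unfolding inverse_two_power_powr q_def by (simp add: algebra_simps)
      finally have "\<rho> powr (?d - \<beta> - s) = R powr (?d - \<beta> - s) * q^k" .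
      then show ?thesis by (simp add: powr_add[symmetric])
    qed
    then show "(\<integral>\<^sup>+y. indicator {y. 2^k \<le> R / delta D y \<and> R / delta D y < 2^Suc k} y * ?f y \<partial>lborel)
        \<le> ennreal (K * R powr (?d - \<beta>) * q^k)"
      using nn_integral_boundary_layer_le[OF cov z \<open>0 < \<rho>\<close> \<open>\<rho> \<le> R\<close> \<open>0 \<le> C\<close> \<open>0 \<le> \<beta>\<close>]
      unfolding shell by (simp add: K_def mult.assoc)
  qed
  also have "\<dots> = ennreal (K * R powr (?d - \<beta>) / (1 - q))"
    using \<open>0 \<le> K\<close> \<open>q < 1\<close> by (intro suminf_ennreal_geometric) (auto simp: q_def)
  finally show ?thesis by (simp add: K_def q_def)
qed

lemma nn_integral_ball_delta_ge_le:
  fixes D :: "'a::euclidean_space set"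
  assumes "0 < R" and "0 \<le> \<beta>"
  shows "(\<integral>\<^sup>+y. indicator {y. R \<le> delta D y} y
                * (indicator (ball x R) y * ennreal (delta D y powr -\<beta>)) \<partial>lborel)
     \<le> ennreal (unit_ball_vol (real DIM('a)) * R powr (real DIM('a) - \<beta>))"
proof -
  have "(\<integral>\<^sup>+y. indicator {y. R \<le> delta D y} y
                * (indicator (ball x R) y * ennreal (delta D y powr -\<beta>)) \<partial>lborel)
      \<le> (\<integral>\<^sup>+y. ennreal (R powr -\<beta>) * indicator (ball x R) y \<partial>lborel)"
  proof (intro nn_integral_mono)
    fix y
    have "R \<le> delta D y \<Longrightarrow> delta D y powr -\<beta> \<le> R powr -\<beta>"
      using assms by (intro powr_mono2') auto
    then show "indicator {y. R \<le> delta D y} y * (indicator (ball x R) y * ennreal (delta D y powr -\<beta>))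
        \<le> ennreal (R powr -\<beta>) * indicator (ball x R) y"
      by (auto simp: indicator_def intro: ennreal_leI)
  qed
  also have "\<dots> = ennreal (R powr -\<beta>) * emeasure lborel (ball x R)"
    by (rule nn_integral_cmult_indicator) simp
  also have "\<dots> = ennreal (unit_ball_vol (real DIM('a)) * R powr (real DIM('a) - \<beta>))"
    using \<open>0 < R\<close>
    by (simp add: emeasure_ball ennreal_mult'[symmetric] powr_realpow[symmetric] powr_add[symmetric] mult_ac)
  finally show ?thesis .
qed

lemma nn_integral_boundary_ball_delta_powr_le:
  fixes D :: "'a::euclidean_space set"
  assumes cov: "assouad_covering (frontier D) C s"
    and z: "z \<in> frontier D" and "0 < R" and "0 \<le> C" and "0 \<le> \<beta>" and "\<beta> + s < real DIM('a)"
  shows "(\<integral>\<^sup>+y. indicator (ball z R) y * ennreal (delta D y powr -\<beta>) \<partial>lborel)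
     \<le> ennreal ((unit_ball_vol (real DIM('a)) + 2 powr (\<beta> + s + real DIM('a)) * C * unit_ball_vol (real DIM('a))
                / (1 - 2 powr (\<beta> + s - real DIM('a)))) * R powr (real DIM('a) - \<beta>))"
proof -
  let ?d = "real DIM('a)" and ?\<omega> = "unit_ball_vol (real DIM('a))"
  let ?f = "\<lambda>y. indicator (ball z R) y * ennreal (delta D y powr -\<beta>)"
  define K where "K = 2 powr (\<beta> + s + ?d) * C * ?\<omega> / (1 - 2 powr (\<beta> + s - ?d))"
  have "0 \<le> K"
    using \<open>0 \<le> C\<close> \<open>\<beta> + s < ?d\<close> powr_less_one[of 2 "\<beta> + s - ?d"] by (simp add: K_def)
  have "?f y \<le> indicator {y. R \<le> delta D y} y * ?f y + indicator {y. 1 \<le> R / delta D y} y * ?f y" for y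
  proof -
    consider "delta D y = 0" | "R \<le> delta D y" | "0 < delta D y" "delta D y < R"
      using delta_nonneg[of D y] by linarith
    \<comment> \<open>on \<open>frontier D\<close> the integrand is \<open>0 powr -\<beta> = 0\<close>\<close>
    then show ?thesis by cases (simp_all add: le_divide_eq_1)
  qed
  then have "(\<integral>\<^sup>+y. ?f y \<partial>lborel)
      \<le> (\<integral>\<^sup>+y. indicator {y. R \<le> delta D y} y * ?f y + indicator {y. 1 \<le> R / delta D y} y * ?f y \<partial>lborel)"
    by (rule nn_integral_mono)
  also have "\<dots> = (\<integral>\<^sup>+y. indicator {y. R \<le> delta D y} y * ?f y \<partial>lborel)
                  + (\<integral>\<^sup>+y. indicator {y. 1 \<le> R / delta D y} y * ?f y \<partial>lborel)"
    by (intro nn_integral_add) measurable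
  also have "\<dots> \<le> ennreal (?\<omega> * R powr (?d - \<beta>)) + ennreal (K * R powr (?d - \<beta>))"
    using nn_integral_ball_delta_ge_le[OF \<open>0 < R\<close> \<open>0 \<le> \<beta>\<close>, of D z]
      nn_integral_near_boundary_delta_powr_le[OF assms]
    by (intro add_mono) (simp_all add: K_def)
  also have "\<dots> = ennreal ((?\<omega> + K) * R powr (?d - \<beta>))"
    using \<open>0 \<le> K\<close> by (simp add: distrib_right ennreal_plus)
  finally show ?thesis unfolding K_def .
qed

lemma nn_integral_ball_delta_powr_le:
  fixes D :: "'a::euclidean_space set"
  assumes cov: "assouad_covering (frontier D) C s"
    and "0 \<le> C" and "0 \<le> \<beta>" and "\<beta> + s < real DIM('a)"
  obtains K where "0 \<le> K"
    "\<And>x R. 0 < R \<Longrightarrow> (\<integral>\<^sup>+y. indicator (ball x R) y * ennreal (delta D y powr -\<beta>) \<partial>lborel)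
                        \<le> ennreal (K * R powr (real DIM('a) - \<beta>))"
proof -
  let ?d = "real DIM('a)" and ?\<omega> = "unit_ball_vol (real DIM('a))"
  define K\<^sub>b where "K\<^sub>b = ?\<omega> + 2 powr (\<beta> + s + ?d) * C * ?\<omega> / (1 - 2 powr (\<beta> + s - ?d))"
  define K where "K = ?\<omega> + K\<^sub>b * 3 powr (?d - \<beta>)"
  have "0 \<le> K\<^sub>b"
    using \<open>0 \<le> C\<close> \<open>\<beta> + s < ?d\<close> powr_less_one[of 2 "\<beta> + s - ?d"] by (simp add: K\<^sub>b_def)
  then have "0 \<le> K" by (simp add: K_def)
  moreover have "(\<integral>\<^sup>+y. indicator (ball x R) y * ennreal (delta D y powr -\<beta>) \<partial>lborel)
      \<le> ennreal (K * R powr (?d - \<beta>))" if "0 < R" for x R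
  \<comment> \<open>Either \<open>ball x R\<close> keeps distance \<open>R\<close> from the boundary, or it lies in a ball of radius \<open>3 * R\<close>
     centred on the boundary.\<close>
  proof (cases "frontier D = {} \<or> 2 * R \<le> delta D x")
    case True
    have "indicator (ball x R) y * ennreal (delta D y powr -\<beta>)
        \<le> indicator {y. R \<le> delta D y} y * (indicator (ball x R) y * ennreal (delta D y powr -\<beta>))" for y
    proof (cases "y \<in> ball x R \<and> frontier D \<noteq> {}")
      case in_ball: True
      have "delta D x \<le> delta D y + dist x y"
        unfolding delta_def by (intro infdist_triangle)
      then show ?thesis using in_ball True by (simp add: dist_commute)
    qed (auto simp: delta_def infdist_def)
    then have "(\<integral>\<^sup>+y. indicator (ball x R) y * ennreal (delta D y powr -\<beta>) \<partial>lborel)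
        \<le> ennreal (?\<omega> * R powr (?d - \<beta>))"
      by (intro order_trans[OF nn_integral_mono nn_integral_ball_delta_ge_le] \<open>0 < R\<close> \<open>0 \<le> \<beta>\<close>)
    also have "\<dots> \<le> ennreal (K * R powr (?d - \<beta>))"
      using \<open>0 \<le> K\<^sub>b\<close> by (intro ennreal_leI mult_right_mono) (auto simp: K_def)
    finally show ?thesis .
  next
    case False
    then obtain z where z: "z \<in> frontier D" "delta D x = dist x z"
      using delta_attained by blast
    have "ball x R \<subseteq> ball z (3 * R)"
    proof
      fix y assume "y \<in> ball x R"
      then show "y \<in> ball z (3 * R)"
        using False z dist_triangle[of z y x] by (simp add: dist_commute)
    qed
    then have "(\<integral>\<^sup>+y. indicator (ball x R) y * ennreal (delta D y powr -\<beta>) \<partial>lborel)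
        \<le> (\<integral>\<^sup>+y. indicator (ball z (3 * R)) y * ennreal (delta D y powr -\<beta>) \<partial>lborel)"
      by (intro nn_integral_mono mult_right_mono) (auto simp: indicator_def)
    also have "\<dots> \<le> ennreal (K\<^sub>b * (3 * R) powr (?d - \<beta>))"
      unfolding K\<^sub>b_def using \<open>0 < R\<close> assms
      by (intro nn_integral_boundary_ball_delta_powr_le[OF cov z(1)]) auto
    also have "\<dots> \<le> ennreal (K * R powr (?d - \<beta>))"
      using \<open>0 < R\<close> \<open>0 \<le> K\<^sub>b\<close> by (intro ennreal_leI) (simp add: K_def powr_mult distrib_right mult_ac)
    finally show ?thesis .
  qed
  ultimately show ?thesis using that by blast
qed

section \<open>Finiteness of the energy\<close>

text \<open>The factor \<open>min (r\<^sup>2) 1\<close> comes from the Lipschitz bound on \<open>u\<close>, the last two factors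
  from the upper scaling of \<open>\<Phi>\<close> with \<open>w = delta D powr -\<beta>\<close> (see \<open>kernel_le_boundary_weights\<close>).\<close>

definition energy_majorant :: "real \<Rightarrow> real \<Rightarrow> ('a::euclidean_space \<Rightarrow> real) \<Rightarrow> 'a \<Rightarrow> 'a \<Rightarrow> real" where
  "energy_majorant \<alpha> \<beta> w x y = min ((dist x y)\<^sup>2) 1 * dist x y powr -(real DIM('a) + \<alpha>)
     * (1 + dist x y powr \<beta> * w x) * (1 + dist x y powr \<beta> * w y)"

lemma energy_majorant_commute: "energy_majorant \<alpha> \<beta> w x y = energy_majorant \<alpha> \<beta> w y x"
  by (simp add: energy_majorant_def dist_commute mult_ac)

lemma nn_integral_weighted_kernel_le:
  fixes w :: "'a::euclidean_space \<Rightarrow> real"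
  assumes w[measurable]: "w \<in> borel_measurable lborel" and w0: "\<And>y. 0 \<le> w y" and "0 \<le> K"
    and growth: "\<And>x R. 0 < R \<Longrightarrow> (\<integral>\<^sup>+y. indicator (ball x R) y * ennreal (w y) \<partial>lborel)
                                    \<le> ennreal (K * R powr (real DIM('a) - \<beta>))"
    and "0 < 2 + e + real DIM('a)" "e + real DIM('a) < 0"
  obtains B where "0 \<le> B" "\<And>x. (\<integral>\<^sup>+y. ennreal (min ((dist x y)\<^sup>2) 1 * dist x y powr e
                                          * (1 + dist x y powr \<beta> * w y)) \<partial>lborel) \<le> ennreal B"
proof -
  let ?d = "real DIM('a)"
  let ?k = "\<lambda>e (x::'a) y. min ((dist x y)\<^sup>2) 1 * dist x y powr e"
  have unit_growth: "(\<integral>\<^sup>+y. indicator (ball x R) y * 1 \<partial>lborel) \<le> ennreal (unit_ball_vol ?d * R powr ?d)"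
    if "0 < R" for x :: 'a and R
    using that by (simp add: emeasure_ball powr_realpow)
  obtain B\<^sub>1 where "0 \<le> B\<^sub>1" and B\<^sub>1: "\<And>x. (\<integral>\<^sup>+y. ennreal (?k e x y) * 1 \<partial>lborel) \<le> ennreal B\<^sub>1"
    by (rule nn_integral_truncated_kernel_le[of "\<lambda>_. 1" "unit_ball_vol ?d" ?d e]) (use unit_growth assms(5,6) in \<open>auto intro: that\<close>)
  obtain B\<^sub>2 where "0 \<le> B\<^sub>2"
    and B\<^sub>2: "\<And>x. (\<integral>\<^sup>+y. ennreal (?k (e + \<beta>) x y) * ennreal (w y) \<partial>lborel) \<le> ennreal B\<^sub>2"
    by (rule nn_integral_truncated_kernel_le[of "\<lambda>y. ennreal (w y)" K "?d - \<beta>" "e + \<beta>"])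
       (use growth assms(3,5,6) in \<open>auto intro: that\<close>)
  have "(\<integral>\<^sup>+y. ennreal (?k e x y * (1 + dist x y powr \<beta> * w y)) \<partial>lborel) \<le> ennreal (B\<^sub>1 + B\<^sub>2)" for x
  proof -
    have "ennreal (?k e x y * (1 + dist x y powr \<beta> * w y))
        = ennreal (?k e x y) * 1 + ennreal (?k (e + \<beta>) x y) * ennreal (w y)" for y
      using w0[of y] by (simp add: powr_add distrib_left mult_ac ennreal_plus ennreal_mult)
    then have "(\<integral>\<^sup>+y. ennreal (?k e x y * (1 + dist x y powr \<beta> * w y)) \<partial>lborel)
        = (\<integral>\<^sup>+y. ennreal (?k e x y) * 1 + ennreal (?k (e + \<beta>) x y) * ennreal (w y) \<partial>lborel)"
      by simp
    also have "\<dots> = (\<integral>\<^sup>+y. ennreal (?k e x y) * 1 \<partial>lborel)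
                    + (\<integral>\<^sup>+y. ennreal (?k (e + \<beta>) x y) * ennreal (w y) \<partial>lborel)"
      by (intro nn_integral_add) measurable
    also have "\<dots> \<le> ennreal B\<^sub>1 + ennreal B\<^sub>2"
      by (rule add_mono[OF B\<^sub>1 B\<^sub>2])
    finally show ?thesis using \<open>0 \<le> B\<^sub>1\<close> \<open>0 \<le> B\<^sub>2\<close> by (simp add: ennreal_plus)
  qed
  moreover have "0 \<le> B\<^sub>1 + B\<^sub>2" using \<open>0 \<le> B\<^sub>1\<close> \<open>0 \<le> B\<^sub>2\<close> by simp
  ultimately show ?thesis using that by blast
qed

lemma nn_integral_energy_majorant_le:
  fixes w :: "'a::euclidean_space \<Rightarrow> real"
  assumes w[measurable]: "w \<in> borel_measurable lborel" and w0: "\<And>y. 0 \<le> w y" and "0 \<le> K"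
    and growth: "\<And>x R. 0 < R \<Longrightarrow> (\<integral>\<^sup>+y. indicator (ball x R) y * ennreal (w y) \<partial>lborel)
                                    \<le> ennreal (K * R powr (real DIM('a) - \<beta>))"
    and "0 < \<beta>" "\<beta> < \<alpha>" "\<alpha> < 2"
  obtains B where "0 \<le> B"
    "\<And>x. (\<integral>\<^sup>+y. ennreal (energy_majorant \<alpha> \<beta> w x y) \<partial>lborel) \<le> ennreal B * (1 + ennreal (w x))"
proof -
  let ?e = "-(real DIM('a) + \<alpha>)"
  let ?k = "\<lambda>e (x::'a) y. min ((dist x y)\<^sup>2) 1 * dist x y powr e * (1 + dist x y powr \<beta> * w y)"
  have k_nonneg: "0 \<le> ?k e x y" for e x y using w0[of y] by simp
  obtain B\<^sub>1 where "0 \<le> B\<^sub>1" and B\<^sub>1: "\<And>x. (\<integral>\<^sup>+y. ennreal (?k ?e x y) \<partial>lborel) \<le> ennreal B\<^sub>1"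
    by (rule nn_integral_weighted_kernel_le[OF w w0 \<open>0 \<le> K\<close> growth, of ?e]) (use assms in auto)
  obtain B\<^sub>2 where "0 \<le> B\<^sub>2" and B\<^sub>2: "\<And>x. (\<integral>\<^sup>+y. ennreal (?k (?e + \<beta>) x y) \<partial>lborel) \<le> ennreal B\<^sub>2"
    by (rule nn_integral_weighted_kernel_le[OF w w0 \<open>0 \<le> K\<close> growth, of "?e + \<beta>"]) (use assms in auto)
  have "(\<integral>\<^sup>+y. ennreal (energy_majorant \<alpha> \<beta> w x y) \<partial>lborel)
      \<le> ennreal (max B\<^sub>1 B\<^sub>2) * (1 + ennreal (w x))" for x
  proof -
    have "energy_majorant \<alpha> \<beta> w x y = ?k ?e x y + w x * ?k (?e + \<beta>) x y" for y
      unfolding energy_majorant_def powr_add by (simp add: algebra_simps)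
    then have "(\<integral>\<^sup>+y. ennreal (energy_majorant \<alpha> \<beta> w x y) \<partial>lborel)
        = (\<integral>\<^sup>+y. ennreal (?k ?e x y) + ennreal (w x) * ennreal (?k (?e + \<beta>) x y) \<partial>lborel)"
      using w0[of x] k_nonneg by (simp add: ennreal_plus ennreal_mult)
    also have "\<dots> = (\<integral>\<^sup>+y. ennreal (?k ?e x y) \<partial>lborel)
                    + ennreal (w x) * (\<integral>\<^sup>+y. ennreal (?k (?e + \<beta>) x y) \<partial>lborel)"
      by (simp add: nn_integral_add nn_integral_cmult)
    also have "\<dots> \<le> ennreal (max B\<^sub>1 B\<^sub>2) + ennreal (w x) * ennreal (max B\<^sub>1 B\<^sub>2)"
      using order_trans[OF B\<^sub>1[of x] ennreal_leI[OF max.cobounded1]]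
        order_trans[OF B\<^sub>2[of x] ennreal_leI[OF max.cobounded2]]
      by (intro add_mono mult_left_mono) auto
    finally show ?thesis by (simp add: distrib_left mult.commute)
  qed
  moreover have "0 \<le> max B\<^sub>1 B\<^sub>2" using \<open>0 \<le> B\<^sub>1\<close> by simp
  ultimately show ?thesis using that by blast
qed

lemma nn_integral_energy_majorant_finite:
  fixes w :: "'a::euclidean_space \<Rightarrow> real"
  assumes w[measurable]: "w \<in> borel_measurable lborel" and w0: "\<And>y. 0 \<le> w y" and "0 \<le> K"
    and growth: "\<And>x R. 0 < R \<Longrightarrow> (\<integral>\<^sup>+y. indicator (ball x R) y * ennreal (w y) \<partial>lborel)
                                    \<le> ennreal (K * R powr (real DIM('a) - \<beta>))"
    and "0 < \<beta>" "\<beta> < \<alpha>" "\<alpha> < 2" and "0 < \<rho>"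
  shows "(\<integral>\<^sup>+p. indicator (ball 0 \<rho>) (fst p) * ennreal (energy_majorant \<alpha> \<beta> w (fst p) (snd p))
            \<partial>(lborel \<Otimes>\<^sub>M lborel)) < \<infinity>"
proof -
  obtain B where "0 \<le> B"
    and B: "\<And>x. (\<integral>\<^sup>+y. ennreal (energy_majorant \<alpha> \<beta> w x y) \<partial>lborel) \<le> ennreal B * (1 + ennreal (w x))"
    by (rule nn_integral_energy_majorant_le[OF w w0 \<open>0 \<le> K\<close> growth]) (use assms in auto)
  have "(\<integral>\<^sup>+p. indicator (ball 0 \<rho>) (fst p) * ennreal (energy_majorant \<alpha> \<beta> w (fst p) (snd p))
            \<partial>(lborel \<Otimes>\<^sub>M lborel))
      = (\<integral>\<^sup>+x. indicator (ball 0 \<rho>) x * (\<integral>\<^sup>+y. ennreal (energy_majorant \<alpha> \<beta> w x y) \<partial>lborel) \<partial>lborel)"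
    by (subst lborel.nn_integral_fst[symmetric]) (auto simp: energy_majorant_def intro!: nn_integral_cong nn_integral_cmult)
  also have "\<dots> \<le> (\<integral>\<^sup>+x. ennreal B * indicator (ball 0 \<rho>) x
                        + ennreal B * (indicator (ball 0 \<rho>) x * ennreal (w x)) \<partial>lborel)"
    using B by (intro nn_integral_mono) (auto simp: indicator_def distrib_left)
  also have "\<dots> = ennreal B * emeasure lborel (ball (0::'a) \<rho>)
                  + ennreal B * (\<integral>\<^sup>+x. indicator (ball 0 \<rho>) x * ennreal (w x) \<partial>lborel)"
    by (simp add: nn_integral_add nn_integral_cmult nn_integral_cmult_indicator)
  also have "\<dots> < \<infinity>"
    using emeasure_lborel_ball_finite[of "0::'a" \<rho>] le_less_trans[OF growth[OF \<open>0 < \<rho>\<close>, of 0]]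
    by (simp add: ennreal_mult_less_top)
  finally show ?thesis .
qed

lemma nn_integral_lborel_pair_swap:
  fixes f :: "'a::euclidean_space \<times> 'a \<Rightarrow> ennreal"
  assumes [measurable]: "f \<in> borel_measurable (lborel \<Otimes>\<^sub>M lborel)"
  shows "(\<integral>\<^sup>+p. f (snd p, fst p) \<partial>(lborel \<Otimes>\<^sub>M lborel)) = (\<integral>\<^sup>+p. f p \<partial>(lborel \<Otimes>\<^sub>M lborel))"
proof -
  have "(\<lambda>p. f (snd p, fst p)) \<in> borel_measurable (lborel \<Otimes>\<^sub>M lborel)" by measurable
  from lborel.nn_integral_fst[OF this]
  have "(\<integral>\<^sup>+p. f (snd p, fst p) \<partial>(lborel \<Otimes>\<^sub>M lborel)) = (\<integral>\<^sup>+x. \<integral>\<^sup>+y. f (y, x) \<partial>lborel \<partial>lborel)"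
    by simp
  also have "\<dots> = (\<integral>\<^sup>+p. f p \<partial>(lborel \<Otimes>\<^sub>M lborel))"
    by (rule lborel_pair.nn_integral_snd) measurable
  finally show ?thesis .
qed

lemma energy_integrand_le_majorant:
  fixes D :: "'a::euclidean_space set" and u w :: "'a \<Rightarrow> real"
  assumes w0: "\<And>y. 0 \<le> w y" and "0 \<le> C" "0 \<le> c"
    and J_le: "\<And>x y. x \<in> D \<Longrightarrow> y \<in> D \<Longrightarrow> x \<noteq> y \<Longrightarrow>
      J x y \<le> C * dist x y powr -(real DIM('a) + \<alpha>) * (1 + dist x y powr \<beta> * w x) * (1 + dist x y powr \<beta> * w y)"
    and u_diff: "\<And>x y. x \<in> D \<Longrightarrow> y \<in> D \<Longrightarrow> (u x - u y)\<^sup>2 \<le> c * min ((dist x y)\<^sup>2) 1"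
    and supp: "{x \<in> D. u x \<noteq> 0} \<subseteq> B"
  shows "indicator (D \<times> D) (x, y) * ennreal ((u x - u y)\<^sup>2 * J x y)
     \<le> ennreal (c * C) * ((indicator B x + indicator B y) * ennreal (energy_majorant \<alpha> \<beta> w x y))"
proof (cases "x \<in> D \<and> y \<in> D \<and> x \<noteq> y \<and> (x \<in> B \<or> y \<in> B)")
  case True
  let ?W = "C * dist x y powr -(real DIM('a) + \<alpha>) * (1 + dist x y powr \<beta> * w x) * (1 + dist x y powr \<beta> * w y)"
  have "0 \<le> ?W" using \<open>0 \<le> C\<close> w0[of x] w0[of y] by simp
  have "(u x - u y)\<^sup>2 * J x y \<le> (u x - u y)\<^sup>2 * ?W"
    using J_le True by (intro mult_left_mono) auto
  also have "\<dots> \<le> c * min ((dist x y)\<^sup>2) 1 * ?W"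
    using u_diff True \<open>0 \<le> ?W\<close> by (intro mult_right_mono) auto
  also have "\<dots> = c * C * energy_majorant \<alpha> \<beta> w x y"
    by (simp add: energy_majorant_def mult_ac)
  finally have "ennreal ((u x - u y)\<^sup>2 * J x y) \<le> ennreal (c * C) * ennreal (energy_majorant \<alpha> \<beta> w x y)"
    unfolding ennreal_mult'[OF mult_nonneg_nonneg[OF \<open>0 \<le> c\<close> \<open>0 \<le> C\<close>], symmetric]
    by (rule ennreal_leI)
  also have "\<dots> \<le> ennreal (c * C) * ((indicator B x + indicator B y) * ennreal (energy_majorant \<alpha> \<beta> w x y))"
  proof (intro mult_left_mono)
    have "1 \<le> (indicator B x + indicator B y :: ennreal)"
      using True by (auto simp: indicator_def)
    then show "ennreal (energy_majorant \<alpha> \<beta> w x y)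
        \<le> (indicator B x + indicator B y) * ennreal (energy_majorant \<alpha> \<beta> w x y)"
      using mult_right_mono[of 1 _ "ennreal (energy_majorant \<alpha> \<beta> w x y)"] by simp
  qed simp
  finally show ?thesis by (simp add: indicator_def)
next
  case False
  then have "(x, y) \<notin> D \<times> D \<or> x = y \<or> (u x = 0 \<and> u y = 0)"
    using supp by blast
  then show ?thesis by auto
qed

lemma energy_finite_if_dominated:
  fixes D :: "'a::euclidean_space set" and u w :: "'a \<Rightarrow> real"
  assumes w[measurable]: "w \<in> borel_measurable lborel" and w0: "\<And>y. 0 \<le> w y" and "0 \<le> K"
    and growth: "\<And>x R. 0 < R \<Longrightarrow> (\<integral>\<^sup>+y. indicator (ball x R) y * ennreal (w y) \<partial>lborel)
                                    \<le> ennreal (K * R powr (real DIM('a) - \<beta>))"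
    and "0 < \<beta>" "\<beta> < \<alpha>" "\<alpha> < 2" and "0 \<le> C" "0 \<le> c"
    and J_le: "\<And>x y. x \<in> D \<Longrightarrow> y \<in> D \<Longrightarrow> x \<noteq> y \<Longrightarrow>
      J x y \<le> C * dist x y powr -(real DIM('a) + \<alpha>) * (1 + dist x y powr \<beta> * w x) * (1 + dist x y powr \<beta> * w y)"
    and u_diff: "\<And>x y. x \<in> D \<Longrightarrow> y \<in> D \<Longrightarrow> (u x - u y)\<^sup>2 \<le> c * min ((dist x y)\<^sup>2) 1"
    and u_supp: "bounded {x \<in> D. u x \<noteq> 0}"
  shows "energy D J u < \<infinity>"
proof -
  obtain \<rho> where "0 < \<rho>" and supp: "{x \<in> D. u x \<noteq> 0} \<subseteq> ball 0 \<rho>"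
    using bounded_subset_ballD[OF u_supp] by blast
  let ?B = "ball (0::'a) \<rho>"
  let ?M = "\<lambda>p. ennreal (energy_majorant \<alpha> \<beta> w (fst p) (snd p))"
  have [measurable]: "?M \<in> borel_measurable (lborel \<Otimes>\<^sub>M lborel)"
    unfolding energy_majorant_def by measurable
  define I where "I = (\<integral>\<^sup>+p. indicator ?B (fst p) * ?M p \<partial>(lborel \<Otimes>\<^sub>M lborel))"
  have "I < \<infinity>"
    unfolding I_def using assms by (intro nn_integral_energy_majorant_finite \<open>0 < \<rho>\<close>) auto
  have "(\<integral>\<^sup>+p. indicator ?B (snd p) * ?M p \<partial>(lborel \<Otimes>\<^sub>M lborel)) = I"
    using nn_integral_lborel_pair_swap[of "\<lambda>p. indicator ?B (fst p) * ?M p"]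
    by (simp add: I_def energy_majorant_commute)
  have "(\<integral>\<^sup>+p. indicator (D \<times> D) p * ennreal ((u (fst p) - u (snd p))\<^sup>2 * J (fst p) (snd p))
          \<partial>(lborel \<Otimes>\<^sub>M lborel))
      \<le> (\<integral>\<^sup>+p. ennreal (c * C) * (indicator ?B (fst p) * ?M p)
                 + ennreal (c * C) * (indicator ?B (snd p) * ?M p) \<partial>(lborel \<Otimes>\<^sub>M lborel))"
  proof (intro nn_integral_mono)
    fix p :: "'a \<times> 'a"
    show "indicator (D \<times> D) p * ennreal ((u (fst p) - u (snd p))\<^sup>2 * J (fst p) (snd p))
        \<le> ennreal (c * C) * (indicator ?B (fst p) * ?M p) + ennreal (c * C) * (indicator ?B (snd p) * ?M p)"
      using energy_integrand_le_majorant[OF w0 \<open>0 \<le> C\<close> \<open>0 \<le> c\<close> J_le u_diff supp, of "fst p" "snd p"]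
      by (simp add: distrib_left distrib_right)
  qed
  also have "\<dots> = ennreal (c * C) * I + ennreal (c * C) * I"
    by (simp add: nn_integral_add nn_integral_cmult I_def \<open>(\<integral>\<^sup>+p. _ \<partial>_) = I\<close>)
  also have "\<dots> < \<infinity>"
    using \<open>I < \<infinity>\<close> by (simp add: ennreal_mult_less_top)
  finally have "(\<integral>\<^sup>+p. indicator (D \<times> D) p * ennreal ((u (fst p) - u (snd p))\<^sup>2 * J (fst p) (snd p))
                  \<partial>(lborel \<Otimes>\<^sub>M lborel)) < \<infinity>" .
  moreover have "ennreal (1/2) < \<infinity>"
    unfolding infinity_ennreal_def by (rule ennreal_less_top)
  ultimately show ?thesis
    unfolding energy_def infinity_ennreal_def ennreal_mult_less_top by blast
qed

theorem proposition3p1: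
  fixes D :: "'a::euclidean_space set"
    and J :: "'a \<Rightarrow> 'a \<Rightarrow> real"
    and \<Phi> :: "real \<Rightarrow> real"
    and \<alpha> \<kappa> R0 C1 :: real
    and A0 :: ereal
    and u :: "'a \<Rightarrow> real"
  assumes alpha: "0 < \<alpha>" "\<alpha> < 2"
    and fat: "kappa_fat \<kappa> R0 D"
    and assouad: "assouad_dim (frontier D) < ereal (real DIM('a))"
    and J_borel: "(\<lambda>p. indicator (D \<times> D) p * J (fst p) (snd p)) \<in> borel_measurable (lborel \<Otimes>\<^sub>M lborel)"
    and J_sym: "\<forall>x\<in>D. \<forall>y\<in>D. J x y = J y x"
    and Phi_cont: "continuous_on {0..} \<Phi>"
    and Phi_mono: "mono_on {0..} \<Phi>"
    and Phi_ge1: "\<forall>t\<ge>0. \<Phi> t \<ge> 1"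
    and Phi0: "\<Phi> 0 = 1"
    and Phi_index: "upper_matuszewska \<Phi> <
                      min (ereal (real DIM('a)) - assouad_dim (frontier D)) (ereal \<alpha>)"
    and A0: "0 < A0"
    and C1: "C1 > 1"
    and J_bounds: "\<forall>x\<in>D. \<forall>y\<in>D. x \<noteq> y \<longrightarrow>
        (let q = J x y * dist x y powr (real DIM('a) + \<alpha>) /
                 \<Phi> ((capA A0 (dist x y))\<^sup>2 / (capA A0 (delta D x) * capA A0 (delta D y)))
         in inverse C1 \<le> q \<and> q \<le> C1)"
    and u_lip: "\<exists>L. lipschitz_on L (closure D) u"
    and u_supp: "compact (closure {x \<in> closure D. u x \<noteq> 0})"
  shows "energy D J u < \<infinity>"
proof -
  obtain \<beta> C s CA where \<beta>: "0 < \<beta>" "\<beta> < \<alpha>" "\<beta> + s < real DIM('a)" and "0 \<le> CA"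
    and scaling: "upper_scaling \<Phi> C \<beta>" and cov: "assouad_covering (frontier D) CA s"
    by (rule exponent_between_indices[OF alpha(1) assouad Phi_index])
  obtain K where "0 \<le> K" and growth: "\<And>x R. 0 < R \<Longrightarrow>
      (\<integral>\<^sup>+y. indicator (ball x R) y * ennreal (delta D y powr -\<beta>) \<partial>lborel)
        \<le> ennreal (K * R powr (real DIM('a) - \<beta>))"
    by (rule nn_integral_ball_delta_powr_le[OF cov \<open>0 \<le> CA\<close> less_imp_le[OF \<beta>(1)] \<beta>(3)]) blast
  obtain L where "lipschitz_on L (closure D) u" using u_lip by blast
  then have "lipschitz_on L D u" using closure_subset by (rule lipschitz_on_subset)
  moreover have "bounded {x \<in> D. u x \<noteq> 0}"
    using compact_imp_bounded[OF u_supp] by (rule bounded_subset)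
      (use closure_subset[of D] closure_subset[of "{x \<in> closure D. u x \<noteq> 0}"] in blast)
  ultimately obtain c where "0 \<le> c"
    and u_diff: "\<And>x y. x \<in> D \<Longrightarrow> y \<in> D \<Longrightarrow> (u x - u y)\<^sup>2 \<le> c * min ((dist x y)\<^sup>2) 1"
    by (rule lipschitz_bounded_support_sq_diff_le) blast
  have J_le: "J x y \<le> C1 * (\<Phi> 1 * max 1 C) * dist x y powr -(real DIM('a) + \<alpha>)
      * (1 + dist x y powr \<beta> * delta D x powr -\<beta>) * (1 + dist x y powr \<beta> * delta D y powr -\<beta>)"
    if "x \<in> D" "y \<in> D" "x \<noteq> y" for x y
  proof -
    have "J x y * dist x y powr (real DIM('a) + \<alpha>)
        / \<Phi> ((capA A0 (dist x y))\<^sup>2 / (capA A0 (delta D x) * capA A0 (delta D y))) \<le> C1"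
      using J_bounds that by (simp add: Let_def)
    then show ?thesis
      using that C1 \<beta>
      by (intro kernel_le_boundary_weights[OF scaling Phi_mono Phi_ge1 _ A0 _ delta_nonneg delta_nonneg])
         auto
  qed
  have "0 \<le> C1 * (\<Phi> 1 * max 1 C)"
    using C1 Phi_ge1[rule_format, of 1] by (intro mult_nonneg_nonneg) auto
  have w_meas: "(\<lambda>y. delta D y powr -\<beta>) \<in> borel_measurable lborel" by measurable
  show ?thesis
    by (rule energy_finite_if_dominated[OF w_meas _ \<open>0 \<le> K\<close> growth \<beta>(1,2) alpha(2) \<open>0 \<le> C1 * _\<close> \<open>0 \<le> c\<close>
          J_le u_diff \<open>bounded {x \<in> D. u x \<noteq> 0}\<close>])
       simp_all
qed

end
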